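(* Let $R$ be a unital associative ring and $$A=\begin{pmatrix}1&1&1\\1&a&b\\1&c&d\end{pmatrix}\in\widehat{\cal S},\qquad \Psi(A)=\begin{pmatrix}1&1&1\\1&a^+&b^+\\1&c^+&d^+\end{pmatrix}.$$ Then $$a^+=(d-c)^{-1}(db^{-1}-ca^{-1})(db^{-1}-1)^{-1}(d-1).$$
   Context: $R^*$: units of $R$. $M_3^*(R)$: invertible $3\times3$ matrices; $M_3^\star(R)$: matrices with all entries in $R^*$. $J_1(M)=M^{-1}$; $J_2(M)_{jk}=(M_{kj})^{-1}$; $J=J_2\circ J_1$. $\widehat M_3(R)$: matrices whose first row and column consist of $1$'s. For $A=\{a_{j,k}\}\in M_3^\star(R)$: $\Lambda^L(A)_{j,k}=a_{1,1}a_{j,1}^{-1}a_{j,k}a_{1,k}^{-1}$. $\Phi(A)=J_2(\Lambda^L(A^{-1}))$ and $\Psi=J_2\circ\Phi\circ J_2$. ${\cal S}=\{M\in M_3(R):$ all square submatrices of $M$ are invertible and $J_2(M)$ is invertible$\}$, $\widehat{\cal S}={\cal S}\cap\widehat M_3(R)$. *)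

theory Defs
  imports "HOL-Analysis.Analysis"
begin

text \<open>Matrices in M_3(R) are rendered as 'a^3^3; row/column indices 1,2,3 of the
paper are the numerals 1, 2, 3 of type 3 (where 3 = 0, but the three are distinct).\<close>

definition is_unit_r :: "'a::ring_1 \<Rightarrow> bool" where
  "is_unit_r x \<longleftrightarrow> (\<exists>y. x * y = 1 \<and> y * x = 1)"

definition uinv :: "'a::ring_1 \<Rightarrow> 'a" where
  "uinv x = (SOME y. x * y = 1 \<and> y * x = 1)"

definition J1 :: "'a::ring_1^3^3 \<Rightarrow> 'a^3^3" where
  "J1 M = matrix_inv M"

definition J2 :: "'a::ring_1^3^3 \<Rightarrow> 'a^3^3" where
  "J2 M = (\<chi> j k. uinv (M $ k $ j))"

definition LambdaL :: "'a::ring_1^3^3 \<Rightarrow> 'a^3^3" where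
  "LambdaL A = (\<chi> j k. A $ 1 $ 1 * uinv (A $ j $ 1) * A $ j $ k * uinv (A $ 1 $ k))"

definition Phi :: "'a::ring_1^3^3 \<Rightarrow> 'a^3^3" where
  "Phi A = J2 (LambdaL (matrix_inv A))"

definition Psi :: "'a::ring_1^3^3 \<Rightarrow> 'a^3^3" where
  "Psi A = J2 (Phi (J2 A))"

definition submatrix_invertible :: "'a::ring_1^3^3 \<Rightarrow> 3 set \<Rightarrow> 3 set \<Rightarrow> bool" where
  "submatrix_invertible M I K \<longleftrightarrow>
     (\<exists>N :: 3 \<Rightarrow> 3 \<Rightarrow> 'a.
        (\<forall>i\<in>I. \<forall>i'\<in>I. (\<Sum>k\<in>K. M $ i $ k * N k i') = (if i = i' then 1 else 0)) \<and>
        (\<forall>k\<in>K. \<forall>k'\<in>K. (\<Sum>i\<in>I. N k i * M $ i $ k') = (if k = k' then 1 else 0)))"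

definition S_set :: "('a::ring_1^3^3) set" where
  "S_set = {M. (\<forall>I K. I \<noteq> {} \<and> card I = card K \<longrightarrow> submatrix_invertible M I K)
               \<and> invertible (J2 M)}"

definition hatM3 :: "('a::ring_1^3^3) set" where
  "hatM3 = {M. \<forall>j. M $ 1 $ j = 1 \<and> M $ j $ 1 = 1}"

definition hatS_set :: "('a::ring_1^3^3) set" where
  "hatS_set = S_set \<inter> hatM3"

end

theory Submission
  imports Defs
begin

text \<open>
  The entry in question is c11 c21^-1 c22 c12^-1, where (cjk) is the inverse of J2(A), whose rows
  are (1, 1, 1), (1, a^-1, c^-1) and (1, b^-1, d^-1). Among the scalar equations saying that (cjk)
  is a two-sided inverse, take two in which some unknown has coefficients u^-1 and v^-1;
  multiplying them by u resp. v and subtracting eliminates that unknown. This yields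
  (d - c) c11 = -(d b^-1 - c a^-1) c21 and (d - 1) c12 = -(d b^-1 - 1) c22, and relations of the
  same kind give left and right inverses of c21 and c22 (the ring is not commutative, so both
  sides are needed). The elements d - c, d - 1, d - b and d - c a^-1 b that must be units are
  Schur complements of 2x2 submatrices of A.
\<close>

lemma is_unit_rI:
  fixes x :: "'a::ring_1"
  assumes "x * y = 1" and "z * x = 1"
  shows "is_unit_r x"
proof -
  have "z = y" by (metis assms mult.assoc mult_1_left mult_1_right)
  then show ?thesis using assms unfolding is_unit_r_def by blast
qed

lemma uinv_inverse: "is_unit_r x \<Longrightarrow> x * uinv x = 1 \<and> uinv x * x = 1"
  unfolding is_unit_r_def uinv_def by (rule someI_ex)

lemma right_uinv: "is_unit_r x \<Longrightarrow> x * uinv x = 1"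
  using uinv_inverse by blast

lemma left_uinv: "is_unit_r x \<Longrightarrow> uinv x * x = 1"
  using uinv_inverse by blast

lemma uinv_unique:
  fixes x :: "'a::ring_1"
  assumes "x * y = 1" and "y * x = 1"
  shows "uinv x = y"
  by (metis assms is_unit_r_def left_uinv mult.assoc mult_1_left mult_1_right)

lemma is_unit_r_1: "is_unit_r (1::'a::ring_1)"
  unfolding is_unit_r_def by auto

lemma uinv_1 [simp]: "uinv (1::'a::ring_1) = 1"
  by (rule uinv_unique) simp_all

lemma is_unit_r_uinv: "is_unit_r x \<Longrightarrow> is_unit_r (uinv x)"
  using uinv_inverse unfolding is_unit_r_def by blast

lemma uinv_uinv: "is_unit_r x \<Longrightarrow> uinv (uinv x) = x"
  by (simp add: uinv_unique left_uinv right_uinv)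

lemma is_unit_r_mult:
  fixes x :: "'a::ring_1"
  shows "is_unit_r x \<Longrightarrow> is_unit_r y \<Longrightarrow> is_unit_r (x * y)"
  unfolding is_unit_r_def by (metis mult.assoc mult_1_left)

lemma uinv_mult:
  fixes x :: "'a::ring_1"
  assumes "is_unit_r x" and "is_unit_r y"
  shows "uinv (x * y) = uinv y * uinv x"
  by (rule uinv_unique)
    (metis (no_types) assms left_uinv right_uinv mult.assoc mult_1_left)+

lemma is_unit_r_minus: "is_unit_r (x::'a::ring_1) \<Longrightarrow> is_unit_r (- x)"
  unfolding is_unit_r_def by (metis minus_mult_minus)

lemma mult_uinv_eq:
  fixes x :: "'a::ring_1"
  assumes "is_unit_r y" and "x = z * y"
  shows "x * uinv y = z"
  by (simp add: assms mult.assoc right_uinv)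

lemma eq_uinv_mult:
  fixes x :: "'a::ring_1"
  assumes "is_unit_r w" and "w * x = e"
  shows "x = uinv w * e"
  by (metis assms left_uinv mult.assoc mult_1_left)

lemma eq_mult_uinv:
  fixes x :: "'a::ring_1"
  assumes "is_unit_r w" and "x * w = e"
  shows "x = e * uinv w"
  by (metis assms right_uinv mult.assoc mult_1_right)

lemma is_unit_r_diff_mult_uinv:
  fixes d e :: "'a::ring_1"
  assumes "is_unit_r b" and "is_unit_r (d - e * b)"
  shows "is_unit_r (d * uinv b - e)"
proof -
  have "d * uinv b - e = (d - e * b) * uinv b"
    using assms(1) by (simp add: algebra_simps mult.assoc right_uinv)
  then show ?thesis
    using assms by (simp add: is_unit_r_mult is_unit_r_uinv)
qed

lemma eliminate_left:
  fixes x y z :: "'a::ring_1"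
  assumes "x + p * y + r * z = e" and "x + q * y + s * z = f"
    and "u * r = 1" and "v * s = 1"
  shows "(v - u) * x + (v * q - u * p) * y = v * f - u * e"
proof -
  have "u * x + u * p * y + z = u * e"
    using arg_cong[OF assms(1), of "(*) u"] assms(3)
    by (simp add: distrib_left mult.assoc[symmetric])
  moreover have "v * x + v * q * y + z = v * f"
    using arg_cong[OF assms(2), of "(*) v"] assms(4)
    by (simp add: distrib_left mult.assoc[symmetric])
  ultimately have "(v * x + v * q * y + z) - (u * x + u * p * y + z) = v * f - u * e"
    by simp
  then show ?thesis
    by (simp add: algebra_simps)
qed

lemma eliminate_right:
  fixes x y z :: "'a::ring_1"
  assumes "x + y * p + z * r = e" and "x + y * q + z * s = f"
    and "r * u = 1" and "s * v = 1"
  shows "x * (v - u) + y * (q * v - p * u) = f * v - e * u"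
proof -
  have "x * u + y * p * u + z = e * u"
    using arg_cong[OF assms(1), of "\<lambda>t. t * u"] assms(3)
    by (simp add: distrib_right mult.assoc)
  moreover have "x * v + y * q * v + z = f * v"
    using arg_cong[OF assms(2), of "\<lambda>t. t * v"] assms(4)
    by (simp add: distrib_right mult.assoc)
  ultimately have "(x * v + y * q * v + z) - (x * u + y * p * u + z) = f * v - e * u"
    by simp
  then show ?thesis
    by (simp add: algebra_simps)
qed

lemma solve_linear_left:
  fixes x y :: "'a::ring_1"
  assumes "is_unit_r w" and "w * x + q * y = 0"
  shows "x = - (uinv w * q * y)"
proof -
  have "w * x = - (q * y)"
    using assms(2) by (simp add: eq_neg_iff_add_eq_0)
  then have "x = uinv w * - (q * y)"
    by (rule eq_uinv_mult[OF assms(1)])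
  then show ?thesis
    by (simp add: mult.assoc)
qed

lemma solve_linear_right:
  fixes x y :: "'a::ring_1"
  assumes "is_unit_r w" and "x * w + y * q = 0"
  shows "x = - (y * q * uinv w)"
proof -
  have "x * w = - (y * q)"
    using assms(2) by (simp add: eq_neg_iff_add_eq_0)
  then have "x = - (y * q) * uinv w"
    by (rule eq_mult_uinv[OF assms(1)])
  then show ?thesis
    by simp
qed

lemma left_inverse_of_pair:
  fixes x y :: "'a::ring_1"
  assumes "is_unit_r w" and "is_unit_r e"
    and "w * x + q * y = 0" and "r * x + s * y = e"
  shows "uinv e * (s - r * uinv w * q) * y = 1"
proof -
  have "x = - (uinv w * q * y)"
    using assms(1,3) by (rule solve_linear_left)
  then have "(s - r * uinv w * q) * y = e"
    using assms(4) by (simp add: algebra_simps)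
  then show ?thesis
    using assms(2) by (simp add: mult.assoc left_uinv)
qed

lemma right_inverse_of_pair:
  fixes x y :: "'a::ring_1"
  assumes "is_unit_r w" and "is_unit_r e"
    and "x * w + y * q = 0" and "x * r + y * s = e"
  shows "y * ((s - q * uinv w * r) * uinv e) = 1"
proof -
  have "x = - (y * q * uinv w)"
    using assms(1,3) by (rule solve_linear_right)
  then have "y * (s - q * uinv w * r) = e"
    using assms(4) by (simp add: algebra_simps)
  then show ?thesis
    using assms(2) by (simp add: mult.assoc[symmetric] right_uinv)
qed

lemma submatrix_invertible_singleton:
  "submatrix_invertible M {i} {k} \<Longrightarrow> is_unit_r (M $ i $ k)"
  unfolding submatrix_invertible_def is_unit_r_def by auto

lemma schur_complement_unit:
  fixes M :: "'a::ring_1^3^3"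
  assumes "i \<noteq> i'" and "k \<noteq> k'" and "submatrix_invertible M {i, i'} {k, k'}"
    and "is_unit_r (M $ i $ k)"
  shows "is_unit_r (M $ i' $ k' - M $ i' $ k * uinv (M $ i $ k) * M $ i $ k')"
proof -
  obtain N where
    N_right: "\<forall>j\<in>{i, i'}. \<forall>j'\<in>{i, i'}.
      (\<Sum>l\<in>{k, k'}. M $ j $ l * N l j') = (if j = j' then 1 else 0)" and
    N_left: "\<forall>l\<in>{k, k'}. \<forall>l'\<in>{k, k'}.
      (\<Sum>j\<in>{i, i'}. N l j * M $ j $ l') = (if l = l' then 1 else 0)"
    using assms(3) unfolding submatrix_invertible_def by blast
  have "M $ i $ k * N k i' + M $ i $ k' * N k' i' = 0"
    and "M $ i' $ k * N k i' + M $ i' $ k' * N k' i' = 1"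
    using N_right assms(1,2) by auto
  from left_inverse_of_pair[OF assms(4) is_unit_r_1 this]
  have "(M $ i' $ k' - M $ i' $ k * uinv (M $ i $ k) * M $ i $ k') * N k' i' = 1"
    by simp
  moreover have "N k' i * M $ i $ k + N k' i' * M $ i' $ k = 0"
    and "N k' i * M $ i $ k' + N k' i' * M $ i' $ k' = 1"
    using N_left assms(1,2) by auto
  from right_inverse_of_pair[OF assms(4) is_unit_r_1 this]
  have "N k' i' * (M $ i' $ k' - M $ i' $ k * uinv (M $ i $ k) * M $ i $ k') = 1"
    by simp
  ultimately show ?thesis
    by (rule is_unit_rI)
qed

lemma matrix_inv_inverse:
  "invertible (M::'a::semiring_1^'n^'n) \<Longrightarrow>
    M ** matrix_inv M = mat 1 \<and> matrix_inv M ** M = mat 1"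
  unfolding invertible_def matrix_inv_def by (rule someI_ex)

lemma matrix_mult_eq_mat_1_3:
  fixes B C :: "'a::semiring_1^3^3"
  assumes "B ** C = mat 1"
  shows "B $ i $ 1 * C $ 1 $ j + B $ i $ 2 * C $ 2 $ j + B $ i $ 3 * C $ 3 $ j =
    (if i = j then 1 else 0)"
  using arg_cong[OF assms, of "\<lambda>M. M $ i $ j"]
  by (simp add: matrix_matrix_mult_def mat_def sum_3)

locale hat_inverse_pair =
  fixes B C :: "'a::ring_1^3^3" and a b c d :: 'a
  assumes BC: "B ** C = mat 1" and CB: "C ** B = mat 1"
    and B: "B = vector [vector [1, 1, 1], vector [1, uinv a, uinv c], vector [1, uinv b, uinv d]]"
    and units: "is_unit_r b" "is_unit_r c" "is_unit_r d"
      "is_unit_r (d - c)" "is_unit_r (d - 1)" "is_unit_r (d - b)"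
begin

lemma entries_B:
  "B $ 1 $ 1 = 1" "B $ 1 $ 2 = 1" "B $ 1 $ 3 = 1"
  "B $ 2 $ 1 = 1" "B $ 2 $ 2 = uinv a" "B $ 2 $ 3 = uinv c"
  "B $ 3 $ 1 = 1" "B $ 3 $ 2 = uinv b" "B $ 3 $ 3 = uinv d"
  by (simp_all add: B)

lemma B_first_row_col: "B $ 1 $ k = 1" "B $ i $ 1 = 1"
  using exhaust_3[of k] exhaust_3[of i] by (auto simp: entries_B)

lemma column_relations:
  "(d - c) * C $ 1 $ 1 + (d * uinv b - c * uinv a) * C $ 2 $ 1 = 0"
  "(d - 1) * C $ 1 $ 1 + (d * uinv b - 1) * C $ 2 $ 1 = -1"
  "(d - 1) * C $ 1 $ 2 + (d * uinv b - 1) * C $ 2 $ 2 = 0"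
  "(c - 1) * C $ 1 $ 2 + (c * uinv a - 1) * C $ 2 $ 2 = c"
proof -
  have col: "\<And>i j. C $ 1 $ j + B $ i $ 2 * C $ 2 $ j + B $ i $ 3 * C $ 3 $ j =
      (if i = j then 1 else 0)"
    using matrix_mult_eq_mat_1_3[OF BC] by (simp add: B_first_row_col)
  have inv: "c * uinv c = 1" "d * uinv d = 1"
    using units by (simp_all add: right_uinv)
  show "(d - c) * C $ 1 $ 1 + (d * uinv b - c * uinv a) * C $ 2 $ 1 = 0"
    using eliminate_left[OF col[where i=2 and j=1] col[where i=3 and j=1], of c d]
      by (simp add: entries_B inv)
  show "(d - 1) * C $ 1 $ 1 + (d * uinv b - 1) * C $ 2 $ 1 = -1"
    using eliminate_left[OF col[where i=1 and j=1] col[where i=3 and j=1], of 1 d]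
      by (simp add: entries_B inv)
  show "(d - 1) * C $ 1 $ 2 + (d * uinv b - 1) * C $ 2 $ 2 = 0"
    using eliminate_left[OF col[where i=1 and j=2] col[where i=3 and j=2], of 1 d]
      by (simp add: entries_B inv)
  show "(c - 1) * C $ 1 $ 2 + (c * uinv a - 1) * C $ 2 $ 2 = c"
    using eliminate_left[OF col[where i=1 and j=2] col[where i=2 and j=2], of 1 c]
      by (simp add: entries_B inv)
qed

lemma row_relations:
  "C $ 2 $ 2 * (uinv c * d - 1) + C $ 2 $ 1 * (d - 1) = 0"
  "C $ 2 $ 2 * (uinv a * b - 1) + C $ 2 $ 1 * (b - 1) = b"
proof -
  have row: "\<And>i j. C $ i $ 1 + C $ i $ 2 * B $ 2 $ j + C $ i $ 3 * B $ 3 $ j =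
      (if i = j then 1 else 0)"
    using matrix_mult_eq_mat_1_3[OF CB] by (simp add: B_first_row_col)
  have inv: "uinv c * c = 1" "uinv b * b = 1" "uinv d * d = 1"
    using units by (simp_all add: left_uinv)
  show "C $ 2 $ 2 * (uinv c * d - 1) + C $ 2 $ 1 * (d - 1) = 0"
    using eliminate_right[OF row[where i=2 and j=1] row[where i=2 and j=3], of 1 d]
      by (simp add: entries_B inv add.commute)
  show "C $ 2 $ 2 * (uinv a * b - 1) + C $ 2 $ 1 * (b - 1) = b"
    using eliminate_right[OF row[where i=2 and j=1] row[where i=2 and j=2], of 1 b]
      by (simp add: entries_B inv add.commute)
qed

lemma is_unit_r_entry_2_1: "is_unit_r (C $ 2 $ 1)"
proof -
  have "uinv c * d - 1 = uinv c * (d - c)"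
    using units(2) by (simp add: algebra_simps left_uinv)
  then have "is_unit_r (uinv c * d - 1)"
    using units(2,4) by (simp add: is_unit_r_mult is_unit_r_uinv)
  from right_inverse_of_pair[OF this units(1) row_relations]
  obtain r where "C $ 2 $ 1 * r = 1" by blast
  moreover obtain l where "l * C $ 2 $ 1 = 1"
    using left_inverse_of_pair[OF units(4) is_unit_r_minus[OF is_unit_r_1] column_relations(1,2)]
    by blast
  ultimately show ?thesis by (rule is_unit_rI)
qed

lemma is_unit_r_entry_2_2: "is_unit_r (C $ 2 $ 2)"
proof -
  have "C $ 2 $ 1 * (d - 1) + C $ 2 $ 2 * (uinv c * d - 1) = 0"
    and "C $ 2 $ 1 * (b - 1) + C $ 2 $ 2 * (uinv a * b - 1) = b"
    using row_relations by (simp_all add: add.commute)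
  from right_inverse_of_pair[OF units(5,1) this]
  obtain r where "C $ 2 $ 2 * r = 1" by blast
  moreover obtain l where "l * C $ 2 $ 2 = 1"
    using left_inverse_of_pair[OF units(5,2) column_relations(3,4)] by blast
  ultimately show ?thesis by (rule is_unit_rI)
qed

lemma inverse_entry_ratio:
  "C $ 1 $ 1 * uinv (C $ 2 $ 1) * C $ 2 $ 2 * uinv (C $ 1 $ 2) =
   uinv (d - c) * (d * uinv b - c * uinv a) * uinv (d * uinv b - 1) * (d - 1)"
proof -
  define Y where "Y = uinv (d - 1) * (d * uinv b - 1)"
  have unit_db: "is_unit_r (d * uinv b - 1)"
    using is_unit_r_diff_mult_uinv[of b d 1] units by simp
  then have unit_Y: "is_unit_r Y"
    unfolding Y_def using units(5) by (simp add: is_unit_r_mult is_unit_r_uinv)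
  have uinv_Y: "uinv Y = uinv (d * uinv b - 1) * (d - 1)"
    unfolding Y_def using unit_db units(5) by (simp add: uinv_mult is_unit_r_uinv uinv_uinv)
  have "C $ 1 $ 1 = - (uinv (d - c) * (d * uinv b - c * uinv a) * C $ 2 $ 1)"
    using units(4) column_relations(1) by (rule solve_linear_left)
  then have ratio_1: "C $ 1 $ 1 * uinv (C $ 2 $ 1) = - (uinv (d - c) * (d * uinv b - c * uinv a))"
    by (intro mult_uinv_eq[OF is_unit_r_entry_2_1]) simp
  have "C $ 1 $ 2 = - (uinv (d - 1) * (d * uinv b - 1) * C $ 2 $ 2)"
    using units(5) column_relations(3) by (rule solve_linear_left)
  then have C_1_2: "C $ 1 $ 2 = - Y * C $ 2 $ 2"
    by (simp add: Y_def)
  then have "is_unit_r (C $ 1 $ 2)"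
    using unit_Y is_unit_r_entry_2_2 by (simp add: is_unit_r_mult is_unit_r_minus)
  moreover have "C $ 2 $ 2 = - uinv Y * C $ 1 $ 2"
    using C_1_2 unit_Y by (simp add: mult.assoc[symmetric] left_uinv)
  ultimately have ratio_2: "C $ 2 $ 2 * uinv (C $ 1 $ 2) = - uinv Y"
    by (rule mult_uinv_eq)
  have "C $ 1 $ 1 * uinv (C $ 2 $ 1) * C $ 2 $ 2 * uinv (C $ 1 $ 2) =
        (C $ 1 $ 1 * uinv (C $ 2 $ 1)) * (C $ 2 $ 2 * uinv (C $ 1 $ 2))"
    by (simp add: mult.assoc)
  also have "\<dots> = uinv (d - c) * (d * uinv b - c * uinv a) * uinv Y"
    by (simp add: ratio_1 ratio_2)
  finally show ?thesis
    by (simp add: uinv_Y mult.assoc)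
qed

end

lemma hatS_set_units:
  fixes A :: "'a::ring_1^3^3" and a b c d :: 'a
  assumes "A = vector [vector [1, 1, 1], vector [1, a, b], vector [1, c, d]]"
    and "A \<in> hatS_set"
  shows "is_unit_r a" "is_unit_r b" "is_unit_r c" "is_unit_r d"
    "is_unit_r (d - c)" "is_unit_r (d - 1)" "is_unit_r (d - b)" "is_unit_r (d - c * uinv a * b)"
proof -
  have sub: "\<And>I K. I \<noteq> {} \<Longrightarrow> card I = card K \<Longrightarrow> submatrix_invertible A I K"
    using assms(2) unfolding hatS_set_def S_set_def by auto
  have unit_entry: "is_unit_r (A $ i $ k)" for i k
    by (rule submatrix_invertible_singleton) (simp add: sub)
  have schur: "is_unit_r (A $ i' $ k' - A $ i' $ k * uinv (A $ i $ k) * A $ i $ k')"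
    if "i \<noteq> i'" "k \<noteq> k'" for i i' k k'
    using that by (intro schur_complement_unit unit_entry sub) (simp_all add: card_insert_if)
  show "is_unit_r a" "is_unit_r b" "is_unit_r c" "is_unit_r d"
    "is_unit_r (d - c)" "is_unit_r (d - 1)" "is_unit_r (d - b)" "is_unit_r (d - c * uinv a * b)"
    using unit_entry[of 2 2] unit_entry[of 2 3] unit_entry[of 3 2] unit_entry[of 3 3]
      schur[of 1 3 2 3] schur[of 1 3 1 3] schur[of 2 3 1 3] schur[of 2 3 2 3]
    by (simp_all add: assms(1))
qed

theorem lemma13:
  fixes A :: "'a::ring_1^3^3" and a b c d :: 'a
  assumes "A = vector [vector [1, 1, 1], vector [1, a, b], vector [1, c, d]]"
    and "A \<in> hatS_set"
  shows "Psi A $ 2 $ 2 =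
         uinv (d - c) * (d * uinv b - c * uinv a) * uinv (d * uinv b - 1) * (d - 1)"
proof -
  note unit_coeffs = hatS_set_units[OF assms]
  have "invertible (J2 A)"
    using assms(2) unfolding hatS_set_def S_set_def by auto
  define C where "C = matrix_inv (J2 A)"
  have "J2 A = vector [vector [1, 1, 1], vector [1, uinv a, uinv c], vector [1, uinv b, uinv d]]"
    by (simp add: assms(1) J2_def vec_eq_iff forall_3)
  then interpret hat_inverse_pair "J2 A" C a b c d
    using matrix_inv_inverse[OF \<open>invertible (J2 A)\<close>] unit_coeffs unfolding C_def
    by unfold_locales auto
  have "is_unit_r (uinv (d - c) * (d * uinv b - c * uinv a) * uinv (d * uinv b - 1) * (d - 1))"
    using unit_coeffs is_unit_r_diff_mult_uinv[of b d "c * uinv a"]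
      is_unit_r_diff_mult_uinv[of b d 1]
    by (simp add: is_unit_r_mult is_unit_r_uinv)
  moreover have "Psi A $ 2 $ 2 =
      uinv (uinv (C $ 1 $ 1 * uinv (C $ 2 $ 1) * C $ 2 $ 2 * uinv (C $ 1 $ 2)))"
    by (simp add: Psi_def Phi_def J2_def LambdaL_def C_def)
  ultimately show ?thesis
    by (simp add: inverse_entry_ratio uinv_uinv)
qed

end
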